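(* Let $x,y$ satisfy $x+y=u_3+u_4$ and $xy=u_1u_2$. Then for every $n\ge0$, $$P_n(u_1,u_2,u_3,u_4\mid\alpha,\beta)=\sum_{k=0}^n\binom nk A_k\Bigl(x,y\,\Big|\,\frac{\alpha+\beta}{2},\frac{\alpha+\beta}{2}\Bigr)\frac{(\beta-\alpha)^{n-k}(u_3-u_4)^{n-k}}{2^{n-k}}.$$
   Context: For $\sigma=\sigma_1\cdots\sigma_m\in\mathfrak S_m$: ${\rm asc}(\sigma)$, ${\rm des}(\sigma)$ are the numbers of $i\in[m-1]$ with $\sigma_i<\sigma_{i+1}$, resp. $\sigma_i>\sigma_{i+1}$; ${\rm LRmax}(\sigma)$ is the number of $i$ with $\sigma_j<\sigma_i$ for all $j<i$; ${\rm RLmax}(\sigma)$ is the number of $i$ with $\sigma_j<\sigma_i$ for all $j>i$. With the convention $\sigma_0=\sigma_{m+1}=0$: ${\rm W}(\sigma)$ is the number of $i\in[m]$ with $\sigma_{i-1}<\sigma_i>\sigma_{i+1}$; ${\rm V}(\sigma)$ is the number of $i$ with $1<i<m$ and $\sigma_{i-1}>\sigma_i<\sigma_{i+1}$; ${\rm rdd}(\sigma)$ is the number of $i$ with $1<i\le m$ and $\sigma_{i-1}>\sigma_i>\sigma_{i+1}$; ${\rm lda}(\sigma)$ is the number of $i$ with $1\le i<m$ and $\sigma_{i-1}<\sigma_i<\sigma_{i+1}$. Define $$P_n(u_1,u_2,u_3,u_4\mid\alpha,\beta)=\sum_{\sigma\in\mathfrak S_{n+1}}u_1^{{\rm V}(\sigma)}u_2^{{\rm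 W}(\sigma)-1}u_3^{{\rm rdd}(\sigma)}u_4^{{\rm lda}(\sigma)}\alpha^{{\rm LRmax}(\sigma)-1}\beta^{{\rm RLmax}(\sigma)-1},$$ and the $(\alpha,\beta)$-Eulerian polynomials $A_n(x,y\mid\alpha,\beta)=\sum_{\sigma\in\mathfrak S_{n+1}}x^{{\rm asc}(\sigma)}y^{{\rm des}(\sigma)}\alpha^{{\rm LRmax}(\sigma)-1}\beta^{{\rm RLmax}(\sigma)-1}$ for $n\ge0$ (so $A_0=1$). Here $A_k(x,y\mid\gamma,\gamma)$ is symmetric in $x,y$. *)

theory Defs
  imports Complex_Main
begin

definition perms :: "nat \<Rightarrow> nat list set" where
  "perms m = {xs. distinct xs \<and> set xs = {1..m}}"

text \<open>1-based entry with the convention sigma_0 = sigma_(m+1) = 0.\<close>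
definition ent :: "nat list \<Rightarrow> nat \<Rightarrow> nat" where
  "ent s i = (if 1 \<le> i \<and> i \<le> length s then s ! (i - 1) else 0)"

definition asc :: "nat list \<Rightarrow> nat" where
  "asc s = card {i \<in> {1..<length s}. ent s i < ent s (i+1)}"

definition des :: "nat list \<Rightarrow> nat" where
  "des s = card {i \<in> {1..<length s}. ent s i > ent s (i+1)}"

definition LRmax :: "nat list \<Rightarrow> nat" where
  "LRmax s = card {i \<in> {1..length s}. \<forall>j \<in> {1..<i}. ent s j < ent s i}"

definition RLmax :: "nat list \<Rightarrow> nat" where
  "RLmax s = card {i \<in> {1..length s}. \<forall>j \<in> {i<..length s}. ent s j < ent s i}"

definition Wst :: "nat list \<Rightarrow> nat" where
  "Wst s = card {i \<in> {1..length s}. ent s (i-1) < ent s i \<and> ent s i > ent s (i+1)}"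

definition Vst :: "nat list \<Rightarrow> nat" where
  "Vst s = card {i \<in> {1<..<length s}. ent s (i-1) > ent s i \<and> ent s i < ent s (i+1)}"

definition rdd :: "nat list \<Rightarrow> nat" where
  "rdd s = card {i \<in> {1<..length s}. ent s (i-1) > ent s i \<and> ent s i > ent s (i+1)}"

definition lda :: "nat list \<Rightarrow> nat" where
  "lda s = card {i \<in> {1..<length s}. ent s (i-1) < ent s i \<and> ent s i < ent s (i+1)}"

definition Ppoly :: "nat \<Rightarrow> 'a::comm_ring_1 \<Rightarrow> 'a \<Rightarrow> 'a \<Rightarrow> 'a \<Rightarrow> 'a \<Rightarrow> 'a \<Rightarrow> 'a" where
  "Ppoly n u1 u2 u3 u4 \<alpha> \<beta> = (\<Sum>s\<in>perms (n+1).
      u1 ^ Vst s * u2 ^ (Wst s - 1) * u3 ^ rdd s * u4 ^ lda s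
      * \<alpha> ^ (LRmax s - 1) * \<beta> ^ (RLmax s - 1))"

definition Apoly :: "nat \<Rightarrow> 'a::comm_ring_1 \<Rightarrow> 'a \<Rightarrow> 'a \<Rightarrow> 'a \<Rightarrow> 'a" where
  "Apoly n x y \<alpha> \<beta> = (\<Sum>s\<in>perms (n+1).
      x ^ asc s * y ^ des s * \<alpha> ^ (LRmax s - 1) * \<beta> ^ (RLmax s - 1))"

end

theory Submission
  imports Defs
begin

text \<open>Every permutation of \<open>[m + 1]\<close> arises exactly once by raising the entries of a permutation
  of \<open>[m]\<close> by one and inserting the new minimum \<open>1\<close> into one of its \<open>m + 1\<close> gaps.  Tracking how
  \<open>V, W, lda, rdd\<close> (resp. \<open>asc, des\<close>) and the numbers of left-to-right and right-to-left maxima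
  change under such an insertion turns \<open>P\<^sub>n\<close> and \<open>A\<^sub>n\<close> into \<open>n\<close>-fold iterates of linear operators
  on weight functions of these statistics.

  Write \<open>\<alpha> = c - d\<close> and \<open>\<beta> = c + d\<close>.  The operator for \<open>P\<close> is then the symmetric operator
  (\<open>\<alpha> = \<beta> = c\<close>) plus \<open>d\<close> times the difference of raising \<open>lda\<close> and raising \<open>rdd\<close>; this difference
  commutes with the symmetric part and acts on the initial weight as multiplication by \<open>u\<^sub>3 - u\<^sub>4\<close>,
  whence the binomial sum over \<open>k\<close>.  Finally, after symmetrising over \<open>(lda, rdd)\<close> resp.
  \<open>(asc, des)\<close> with binomial weights, both symmetric iterates become the same iterate of an operator
  on the coefficients of the monomials \<open>e\<^sub>1\<^sup>i e\<^sub>2\<^sup>j\<close>, where \<open>(e\<^sub>1, e\<^sub>2)\<close> is \<open>(u\<^sub>3 + u\<^sub>4, u\<^sub>1 u\<^sub>2)\<close>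
  resp. \<open>(x + y, x y)\<close>; the hypotheses say that these pairs coincide.\<close>

section \<open>Inserting a new minimum\<close>

text \<open>\<open>shift_entry\<close> describes the raised entries as seen through \<open>ent\<close>: the sentinel \<open>0\<close> stays.\<close>

definition shift_entry :: "nat \<Rightarrow> nat" where "shift_entry x = (if x = 0 then 0 else Suc x)"

lemma shift_entry_simps [simp]:
  "shift_entry 0 = 0" "shift_entry a = 0 \<longleftrightarrow> a = 0" "shift_entry a \<noteq> 1"
  "shift_entry a < shift_entry b \<longleftrightarrow> a < b" "0 < shift_entry a \<longleftrightarrow> 0 < a"
  "1 < shift_entry a \<longleftrightarrow> 0 < a" "Suc 0 < shift_entry a \<longleftrightarrow> 0 < a" "shift_entry a < 1 \<longleftrightarrow> a = 0"
  by (auto simp: shift_entry_def)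

definition ins_min :: "nat list \<Rightarrow> nat \<Rightarrow> nat list" where
  "ins_min t p = take p (map Suc t) @ 1 # drop p (map Suc t)"

definition pos_list :: "nat list \<Rightarrow> bool" where "pos_list s \<longleftrightarrow> (\<forall>x\<in>set s. 0 < x)"

lemma length_ins_min [simp]: "length (ins_min t p) = Suc (length t)"
  by (simp add: ins_min_def)

lemma ent_0 [simp]: "ent s 0 = 0" by (simp add: ent_def)

lemma ent_pos_iff: "pos_list s \<Longrightarrow> (0 < ent s i) = (1 \<le> i \<and> i \<le> length s)"
  by (auto simp: ent_def pos_list_def)

lemma ent_less_imp_in_range: "ent s a < ent s b \<Longrightarrow> 0 < b \<and> b \<le> length s"
  by (auto simp: ent_def split: if_splits)

lemma ent_ins_min:
  assumes "pos_list t" "p \<le> length t"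
  shows "ent (ins_min t p) i = (if i \<le> p then shift_entry (ent t i) else if i = Suc p then 1 else shift_entry (ent t (i - 1)))"
proof -
  have P: "\<And>k. k < length t \<Longrightarrow> 0 < t ! k" using assms(1) by (auto simp: pos_list_def)
  show ?thesis
  proof (cases "i \<le> p")
    case True
    then show ?thesis using assms P[of "i - 1"]
      by (auto simp: ent_def ins_min_def nth_append shift_entry_def min_def)
  next
    case False
    show ?thesis
    proof (cases "i = Suc p")
      case True then show ?thesis using assms by (auto simp: ent_def ins_min_def nth_append min_def)
    next
      case False
      with \<open>\<not> i \<le> p\<close> have "i \<ge> Suc (Suc p)" by auto
      then show ?thesis using assms P[of "i - 2"]
        by (auto simp: ent_def ins_min_def nth_append shift_entry_def min_def nth_Cons' numeral_2_eq_2)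
    qed
  qed
qed

lemma pos_list_perms: "t \<in> perms m \<Longrightarrow> pos_list t"
  by (auto simp: perms_def pos_list_def)

lemma length_perms: "t \<in> perms m \<Longrightarrow> length t = m"
proof -
  assume "t \<in> perms m"
  then have "distinct t" "set t = {1..m}" by (auto simp: perms_def)
  then show "length t = m" using distinct_card[of t] by simp
qed

lemma ent_perms_inj:
  assumes "t \<in> perms m" "1 \<le> i" "i \<le> m" "1 \<le> j" "j \<le> m" "ent t i = ent t j"
  shows "i = j"
proof -
  have d: "distinct t" and l: "length t = m" using assms(1) length_perms[OF assms(1)] by (auto simp: perms_def)
  have "t ! (i - 1) = t ! (j - 1)" using assms l by (simp add: ent_def)
  then have "i - 1 = j - 1" using d l assms by (simp add: nth_eq_iff_index_eq)
  then show ?thesis using assms by simp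
qed

lemma ent_perms_pos: "t \<in> perms m \<Longrightarrow> 1 \<le> i \<Longrightarrow> i \<le> m \<Longrightarrow> 0 < ent t i"
  using ent_pos_iff[OF pos_list_perms] length_perms by metis

lemma ent_perms_beyond: "t \<in> perms m \<Longrightarrow> m < i \<Longrightarrow> ent t i = 0"
  using length_perms by (auto simp: ent_def)

lemma ent_perms_neq:
  assumes "t \<in> perms m" "1 \<le> i" "i \<le> m" "i \<noteq> j"
  shows "ent t i \<noteq> ent t j"
proof (cases "1 \<le> j \<and> j \<le> m")
  case True
  then show ?thesis using ent_perms_inj[OF assms(1,2,3)] assms(4) by blast
next
  case False
  then have "ent t j = 0" by (auto simp: ent_def length_perms[OF assms(1)])
  then show ?thesis using ent_perms_pos[OF assms(1-3)] by simp
qed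


lemma set_ins_min: "set (ins_min t p) = insert 1 (Suc ` set t)"
proof -
  have "set (ins_min t p) = insert 1 (set (take p (map Suc t)) \<union> set (drop p (map Suc t)))"
    by (simp add: ins_min_def)
  also have "\<dots> = insert 1 (Suc ` set t)" by (simp flip: set_append)
  finally show ?thesis .
qed

lemma distinct_ins_min: "distinct (ins_min t p) \<longleftrightarrow> distinct t \<and> 0 \<notin> set t"
proof -
  have "distinct (xs @ 1 # ys) \<longleftrightarrow> distinct (xs @ ys) \<and> 1 \<notin> set (xs @ ys)" for xs ys :: "nat list"
    by auto
  from this[of "take p (map Suc t)" "drop p (map Suc t)"] show ?thesis
    by (auto simp: ins_min_def distinct_map)
qed

lemma ins_min_in_perms_iff: "ins_min t p \<in> perms (Suc m) \<longleftrightarrow> t \<in> perms m"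
proof -
  have key: "insert 1 (Suc ` A) = {1..Suc m} \<longleftrightarrow> A = {1..m}" if "0 \<notin> A" for A
  proof -
    have e: "{1..Suc m} = insert 1 (Suc ` {1..m})"
      using atLeastAtMost_insertL[of 1 "Suc m"] by simp
    have n: "1 \<notin> Suc ` A" "1 \<notin> Suc ` {1..m}" using that by auto
    have "insert 1 (Suc ` A) = {1..Suc m} \<longleftrightarrow> Suc ` A = Suc ` {1..m}"
      unfolding e by (rule insert_ident[OF n])
    also have "\<dots> \<longleftrightarrow> A = {1..m}" by (simp only: inj_image_eq_iff inj_Suc)
    finally show ?thesis .
  qed
  show ?thesis
  proof
    assume "ins_min t p \<in> perms (Suc m)"
    then have "distinct t" "0 \<notin> set t" "insert 1 (Suc ` set t) = {1..Suc m}"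
      by (simp_all add: perms_def set_ins_min distinct_ins_min)
    then show "t \<in> perms m" using key by (simp add: perms_def)
  next
    assume "t \<in> perms m"
    then have "distinct t" "set t = {1..m}" by (simp_all add: perms_def)
    then show "ins_min t p \<in> perms (Suc m)" using key[of "set t"]
      by (simp add: perms_def set_ins_min distinct_ins_min)
  qed
qed

lemma ins_min_surj:
  assumes "s \<in> perms (Suc m)"
  obtains t p where "p \<le> m" "s = ins_min t p"
proof -
  have "1 \<in> set s" using assms by (simp add: perms_def)
  then obtain xs ys where s: "s = xs @ 1 # ys" by (meson split_list)
  have "x \<noteq> 0" if "x \<in> set (xs @ ys)" for x
    using that assms unfolding s perms_def by auto
  moreover have "x \<noteq> 1" if "x \<in> set (xs @ ys)" for x
    using that assms unfolding s perms_def by auto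
  ultimately have "map Suc (map (\<lambda>x. x - 1) (xs @ ys)) = xs @ ys" by (simp add: map_idI)
  moreover have "length xs \<le> m" using length_perms[OF assms] s by simp
  ultimately show ?thesis using that[of "length xs" "map (\<lambda>x. x - 1) (xs @ ys)"]
    by (simp add: ins_min_def s)
qed

lemma ins_min_inj:
  assumes "0 \<notin> set t" "0 \<notin> set t'" "p \<le> length t" "p' \<le> length t'"
    and "ins_min t p = ins_min t' p'"
  shows "t = t' \<and> p = p'"
proof -
  have "1 \<notin> set (take p (map Suc t))" "1 \<notin> set (drop p (map Suc t))"
    "1 \<notin> set (take p' (map Suc t'))" "1 \<notin> set (drop p' (map Suc t'))"
    using assms(1,2) by (auto dest!: in_set_takeD in_set_dropD)
  then have "take p (map Suc t) = take p' (map Suc t')" "drop p (map Suc t) = drop p' (map Suc t')"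
    using assms(5) unfolding ins_min_def by (simp_all add: append_Cons_eq_iff)
  then have "map Suc t = map Suc t'" "length (take p (map Suc t)) = length (take p' (map Suc t'))"
    by (metis append_take_drop_id, simp)
  then show ?thesis using assms(3,4) by (auto split: if_splits)
qed

lemma bij_betw_ins_min: "bij_betw (\<lambda>(t, p). ins_min t p) (perms m \<times> {..m}) (perms (Suc m))"
proof (rule bij_betw_imageI)
  have "0 \<notin> set t" "length t = m" if "t \<in> perms m" for t
    using that length_perms by (auto simp: perms_def)
  then show "inj_on (\<lambda>(t, p). ins_min t p) (perms m \<times> {..m})"
    by (auto simp: inj_on_def dest: ins_min_inj)
  show "(\<lambda>(t, p). ins_min t p) ` (perms m \<times> {..m}) = perms (Suc m)"
  proof
    show "(\<lambda>(t, p). ins_min t p) ` (perms m \<times> {..m}) \<subseteq> perms (Suc m)"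
      by (auto simp: ins_min_in_perms_iff)
    show "perms (Suc m) \<subseteq> (\<lambda>(t, p). ins_min t p) ` (perms m \<times> {..m})"
    proof
      fix s assume s: "s \<in> perms (Suc m)"
      then obtain t p where "p \<le> m" "s = ins_min t p" by (rule ins_min_surj)
      with s show "s \<in> (\<lambda>(t, p). ins_min t p) ` (perms m \<times> {..m})"
        by (auto simp: ins_min_in_perms_iff)
    qed
  qed
qed

lemma sum_perms_Suc: "(\<Sum>s\<in>perms (Suc m). F s) = (\<Sum>t\<in>perms m. \<Sum>p\<le>m. F (ins_min t p))"
  by (simp add: sum.reindex_bij_betw[OF bij_betw_ins_min, symmetric] sum.cartesian_product
    prod.case_distrib)

section \<open>Descent-type statistics as pattern counts\<close>

definition pattern_at :: "(nat \<Rightarrow> nat \<Rightarrow> nat \<Rightarrow> bool) \<Rightarrow> nat list \<Rightarrow> nat \<Rightarrow> nat" where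
  "pattern_at Q s i = (if 0 < ent s i \<and> Q (ent s (i - 1)) (ent s i) (ent s (Suc i)) then 1 else 0)"

definition pattern_count :: "(nat \<Rightarrow> nat \<Rightarrow> nat \<Rightarrow> bool) \<Rightarrow> nat list \<Rightarrow> nat" where
  "pattern_count Q s = (\<Sum>i<length s + 2. pattern_at Q s i)"

lemma sum_lessThan_add_split: "(\<Sum>i<p + (k::nat). f i) = (\<Sum>i<p. f i) + (\<Sum>i<k. f (p + i))"
  by (induction k) (auto simp: add.assoc)

lemma pattern_count_split:
  assumes "p \<le> length s"
  shows "pattern_count Q s = (\<Sum>i<p. pattern_at Q s i) + pattern_at Q s p + pattern_at Q s (Suc p)
    + (\<Sum>i<length s - p. pattern_at Q s (p + 2 + i))"
proof -
  have "length s + 2 = p + Suc (Suc (length s - p))" using assms by simp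
  then show ?thesis
    unfolding pattern_count_def by (simp only: sum_lessThan_add_split sum.lessThan_Suc_shift) (simp add: add.assoc)
qed

text \<open>Raising preserves the relative order of all entries and the sentinels, so inserting \<open>1\<close>
  after position \<open>p\<close> only replaces the indicators at positions \<open>p, p + 1\<close> of \<open>t\<close> by those at
  positions \<open>p, p + 1, p + 2\<close> of the new list.\<close>

lemma pattern_count_ins_min:
  assumes "pos_list t" "p \<le> length t" and Q: "\<And>a b c. Q (shift_entry a) (shift_entry b) (shift_entry c) = Q a b c"
  shows "pattern_count Q (ins_min t p) + pattern_at Q t p + pattern_at Q t (Suc p) = pattern_count Q t
     + (if 0 < ent t p \<and> Q (shift_entry (ent t (p - 1))) (shift_entry (ent t p)) 1 then 1 else 0)
     + (if Q (shift_entry (ent t p)) 1 (shift_entry (ent t (Suc p))) then 1 else 0)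
     + (if 0 < ent t (Suc p) \<and> Q 1 (shift_entry (ent t (Suc p))) (shift_entry (ent t (Suc (Suc p)))) then 1 else 0)"
proof -
  define k where "k = length t - p"
  have E: "ent (ins_min t p) i = (if i \<le> p then shift_entry (ent t i) else if i = Suc p then 1 else shift_entry (ent t (i - 1)))" for i
    using ent_ins_min[OF assms(1,2)] .
  have "pattern_count Q (ins_min t p) = (\<Sum>i<p. pattern_at Q (ins_min t p) i)
      + pattern_at Q (ins_min t p) p + pattern_at Q (ins_min t p) (Suc p)
      + (\<Sum>i<Suc k. pattern_at Q (ins_min t p) (p + 2 + i))"
    using pattern_count_split[of p "ins_min t p" Q] assms(2) by (simp add: k_def Suc_diff_le)
  also have "(\<Sum>i<p. pattern_at Q (ins_min t p) i) = (\<Sum>i<p. pattern_at Q t i)"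
    by (intro sum.cong refl) (auto simp: pattern_at_def E Q)
  also have "(\<Sum>i<Suc k. pattern_at Q (ins_min t p) (p + 2 + i))
      = pattern_at Q (ins_min t p) (Suc (Suc p)) + (\<Sum>i<k. pattern_at Q t (p + 2 + i))"
    unfolding sum.lessThan_Suc_shift
    by (simp add: pattern_at_def E Q numeral_2_eq_2)
  finally have "pattern_count Q (ins_min t p) = (\<Sum>i<p. pattern_at Q t i)
      + pattern_at Q (ins_min t p) p + pattern_at Q (ins_min t p) (Suc p)
      + pattern_at Q (ins_min t p) (Suc (Suc p)) + (\<Sum>i<k. pattern_at Q t (p + 2 + i))"
    by (simp add: add.assoc)
  moreover have "pattern_count Q t = (\<Sum>i<p. pattern_at Q t i) + pattern_at Q t p + pattern_at Q t (Suc p)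
      + (\<Sum>i<k. pattern_at Q t (p + 2 + i))"
    using pattern_count_split[of p t Q] assms(2) by (simp add: k_def)
  ultimately show ?thesis by (simp add: pattern_at_def E)
qed

lemma card_eq_pattern_count:
  assumes "{i \<in> A. P i} = {i \<in> {..<length s + 2}. 0 < ent s i \<and> Q (ent s (i - 1)) (ent s i) (ent s (Suc i))}"
  shows "card {i \<in> A. P i} = pattern_count Q s"
proof -
  have "card {i \<in> A. P i} = (\<Sum>i\<in>{i \<in> {..<length s + 2}. 0 < ent s i \<and> Q (ent s (i - 1)) (ent s i) (ent s (Suc i))}. 1)"
    unfolding assms by (rule card_eq_sum)
  also have "\<dots> = pattern_count Q s" unfolding pattern_count_def pattern_at_def by (subst sum.inter_filter) auto
  finally show ?thesis .
qed

lemma asc_eq_pattern_count: "pos_list s \<Longrightarrow> asc s = pattern_count (\<lambda>a b c. b < c) s"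
  unfolding asc_def by (rule card_eq_pattern_count) (auto simp: ent_pos_iff dest: ent_less_imp_in_range)

lemma des_eq_pattern_count: "pos_list s \<Longrightarrow> des s = pattern_count (\<lambda>a b c. c < b \<and> 0 < c) s"
  unfolding des_def by (rule card_eq_pattern_count) (auto simp: ent_pos_iff dest: ent_less_imp_in_range)

lemma Wst_eq_pattern_count: "pos_list s \<Longrightarrow> Wst s = pattern_count (\<lambda>a b c. a < b \<and> c < b) s"
  unfolding Wst_def by (rule card_eq_pattern_count) (auto simp: ent_pos_iff dest: ent_less_imp_in_range)

lemma Vst_eq_pattern_count: "pos_list s \<Longrightarrow> Vst s = pattern_count (\<lambda>a b c. b < a \<and> b < c) s"
  unfolding Vst_def by (rule card_eq_pattern_count) (auto simp: ent_pos_iff dest: ent_less_imp_in_range)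

lemma rdd_eq_pattern_count: "pos_list s \<Longrightarrow> rdd s = pattern_count (\<lambda>a b c. b < a \<and> c < b) s"
  unfolding rdd_def by (rule card_eq_pattern_count) (auto simp: ent_pos_iff dest: ent_less_imp_in_range)

lemma lda_eq_pattern_count: "pos_list s \<Longrightarrow> lda s = pattern_count (\<lambda>a b c. a < b \<and> b < c) s"
  unfolding lda_def by (rule card_eq_pattern_count) (auto simp: ent_pos_iff dest: ent_less_imp_in_range)

lemma stats_ins_min:
  assumes "t \<in> perms m" "p \<le> m"
  defines "a \<equiv> ent t (p - 1)" and "b \<equiv> ent t p" and "c \<equiv> ent t (Suc p)" and "d \<equiv> ent t (Suc (Suc p))"
  shows "Vst (ins_min t p) + of_bool (0 < b \<and> b < a \<and> b < c) + of_bool (0 < c \<and> c < b \<and> c < d)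
      = Vst t + of_bool (0 < b \<and> 0 < c)" (is ?V)
    and "Wst (ins_min t p) + of_bool (0 < b \<and> a < b \<and> c < b) + of_bool (0 < c \<and> b < c \<and> d < c)
      = Wst t + of_bool (0 < b \<and> a < b) + of_bool (b = 0 \<and> c = 0) + of_bool (0 < c \<and> d < c)" (is ?W)
    and "lda (ins_min t p) + of_bool (0 < b \<and> a < b \<and> b < c) + of_bool (0 < c \<and> b < c \<and> c < d)
      = lda t + of_bool (b = 0 \<and> 0 < c) + of_bool (0 < c \<and> c < d)" (is ?L)
    and "rdd (ins_min t p) + of_bool (0 < b \<and> b < a \<and> c < b) + of_bool (0 < c \<and> c < b \<and> d < c)
      = rdd t + of_bool (0 < b \<and> b < a) + of_bool (0 < b \<and> c = 0)" (is ?R)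
    and "asc (ins_min t p) + of_bool (0 < b \<and> b < c) = asc t + of_bool (0 < c)" (is ?A)
    and "des (ins_min t p) + of_bool (0 < b \<and> c < b \<and> 0 < c) = des t + of_bool (0 < b)" (is ?D)
proof -
  have pt: "pos_list t" using assms(1) by (rule pos_list_perms)
  have lt: "length t = m" using assms(1) by (rule length_perms)
  have pi: "pos_list (ins_min t p)"
    using assms(1) by (intro pos_list_perms[of _ "Suc m"]) (simp add: ins_min_in_perms_iff)
  have pl: "p \<le> length t" using lt assms(2) by simp
  note L = pattern_count_ins_min[OF pt pl]
  show ?V using L[of "\<lambda>a b c. b < a \<and> b < c"] Vst_eq_pattern_count[OF pt] Vst_eq_pattern_count[OF pi]
    unfolding a_def b_def c_def d_def pattern_at_def by auto
  show ?W using L[of "\<lambda>a b c. a < b \<and> c < b"] Wst_eq_pattern_count[OF pt] Wst_eq_pattern_count[OF pi]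
    unfolding a_def b_def c_def d_def pattern_at_def by auto
  show ?L using L[of "\<lambda>a b c. a < b \<and> b < c"] lda_eq_pattern_count[OF pt] lda_eq_pattern_count[OF pi]
    unfolding a_def b_def c_def d_def pattern_at_def by auto
  show ?R using L[of "\<lambda>a b c. b < a \<and> c < b"] rdd_eq_pattern_count[OF pt] rdd_eq_pattern_count[OF pi]
    unfolding a_def b_def c_def d_def pattern_at_def by auto
  show ?A using L[of "\<lambda>a b c. b < c"] asc_eq_pattern_count[OF pt] asc_eq_pattern_count[OF pi]
    unfolding a_def b_def c_def d_def pattern_at_def by auto
  show ?D using L[of "\<lambda>a b c. c < b \<and> 0 < c"] des_eq_pattern_count[OF pt] des_eq_pattern_count[OF pi]
    unfolding a_def b_def c_def d_def pattern_at_def by auto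
qed

section \<open>Left-to-right and right-to-left maxima\<close>

fun lr_maxima :: "nat \<Rightarrow> nat list \<Rightarrow> nat" where
  "lr_maxima M [] = 0"
| "lr_maxima M (x # xs) = (if M < x then Suc (lr_maxima x xs) else lr_maxima M xs)"

fun rl_maxima :: "nat list \<Rightarrow> nat" where
  "rl_maxima [] = 0"
| "rl_maxima (x # xs) = (if \<forall>y\<in>set xs. y < x then Suc (rl_maxima xs) else rl_maxima xs)"

lemma ent_Cons: "ent (x # s) i = (if i = 0 then 0 else if i = 1 then x else ent s (i - 1))"
  by (auto simp: ent_def nth_Cons')

lemma ent_Cons_Suc[simp]: "ent (x # s) (Suc i) = (if i = 0 then x else ent s i)"
  by (simp add: ent_Cons)

lemma card_Suc_split:
  "card {i \<in> {1..Suc n}. P i} = (if P 1 then 1 else 0) + card {i \<in> {1..n}. P (Suc i)}"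
proof -
  have eq: "{i \<in> {1..Suc n}. P i} = (if P 1 then {1} else {}) \<union> Suc ` {i \<in> {1..n}. P (Suc i)}"
  proof (intro set_eqI iffI)
    fix i assume i: "i \<in> {i \<in> {1..Suc n}. P i}"
    show "i \<in> (if P 1 then {1} else {}) \<union> Suc ` {i \<in> {1..n}. P (Suc i)}"
    proof (cases "i = 1")
      case True then show ?thesis using i by simp
    next
      case False
      then have "i = Suc (i - 1)" "i - 1 \<in> {i \<in> {1..n}. P (Suc i)}" using i by auto
      then have "i \<in> Suc ` {i \<in> {1..n}. P (Suc i)}" by (metis imageI)
      then show ?thesis by simp
    qed
  next
    fix i assume "i \<in> (if P 1 then {1} else {}) \<union> Suc ` {i \<in> {1..n}. P (Suc i)}"
    then show "i \<in> {i \<in> {1..Suc n}. P i}" by (auto split: if_splits)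
  qed
  have "card ((if P 1 then {1} else {}) \<union> Suc ` {i \<in> {1..n}. P (Suc i)})
      = card (if P 1 then {1::nat} else {}) + card (Suc ` {i \<in> {1..n}. P (Suc i)})"
    by (rule card_Un_disjoint) auto
  also have "card (Suc ` {i \<in> {1..n}. P (Suc i)}) = card {i \<in> {1..n}. P (Suc i)}"
    by (rule card_image) simp
  finally show ?thesis unfolding eq by simp
qed

lemma ball_atLeastLessThan_Suc_shift: "1 \<le> n \<Longrightarrow> (\<forall>j\<in>{1..<Suc n}. P j) \<longleftrightarrow> P 1 \<and> (\<forall>j\<in>{1..<n}. P (Suc j))"
proof
  assume "\<forall>j\<in>{1..<Suc n}. P j" "1 \<le> n"
  then show "P 1 \<and> (\<forall>j\<in>{1..<n}. P (Suc j))" by auto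
next
  assume a: "P 1 \<and> (\<forall>j\<in>{1..<n}. P (Suc j))"
  show "\<forall>j\<in>{1..<Suc n}. P j"
  proof
    fix j assume j: "j \<in> {1..<Suc n}"
    show "P j"
    proof (cases "j = 1")
      case True then show ?thesis using a by simp
    next
      case False
      then have "j = Suc (j - 1)" "j - 1 \<in> {1..<n}" using j by auto
      then show ?thesis using a by metis
    qed
  qed
qed

lemma ball_greaterThanAtMost_Suc_shift: "(\<forall>j\<in>{Suc i<..Suc n}. P j) \<longleftrightarrow> (\<forall>j\<in>{i<..n}. P (Suc j))"
proof -
  have "{Suc i<..Suc n} = Suc ` {i<..n}"
    by (simp flip: atLeastSucAtMost_greaterThanAtMost)
  then show ?thesis by simp
qed

lemma card_lr_maxima:
  "card {i \<in> {1..length s}. M < ent s i \<and> (\<forall>j\<in>{1..<i}. ent s j < ent s i)} = lr_maxima M s"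
proof (induction s arbitrary: M)
  case Nil then show ?case by simp
next
  case (Cons x s)
  have "card {i \<in> {1..length (x # s)}. M < ent (x # s) i \<and> (\<forall>j\<in>{1..<i}. ent (x # s) j < ent (x # s) i)}
     = (if M < x then 1 else 0) + card {i \<in> {1..length s}. M < ent s i \<and> (\<forall>j\<in>{1..<Suc i}. ent (x # s) j < ent s i)}"
    by (simp only: length_Cons card_Suc_split) (simp add: Suc_le_eq cong: conj_cong)
  also have "{i \<in> {1..length s}. M < ent s i \<and> (\<forall>j\<in>{1..<Suc i}. ent (x # s) j < ent s i)}
      = {i \<in> {1..length s}. max M x < ent s i \<and> (\<forall>j\<in>{1..<i}. ent s j < ent s i)}"
  proof (rule Collect_cong)
    fix i
    show "(i \<in> {1..length s} \<and> M < ent s i \<and> (\<forall>j\<in>{1..<Suc i}. ent (x # s) j < ent s i)) =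
          (i \<in> {1..length s} \<and> max M x < ent s i \<and> (\<forall>j\<in>{1..<i}. ent s j < ent s i))"
    proof (cases "1 \<le> i")
      case True
      then show ?thesis using ball_atLeastLessThan_Suc_shift[OF True, of "\<lambda>j. ent (x # s) j < ent s i"] by simp
    next
      case False then show ?thesis by simp
    qed
  qed
  also have "card \<dots> = lr_maxima (max M x) s" by (rule Cons.IH)
  finally show ?case by (simp add: max_def)
qed

lemma LRmax_eq_lr_maxima: "pos_list s \<Longrightarrow> LRmax s = lr_maxima 0 s"
  unfolding LRmax_def card_lr_maxima[symmetric, of 0 s]
  by (intro arg_cong[where f = card] Collect_cong) (auto simp: ent_pos_iff)

lemma ball_ent_iff_ball_set: "(\<forall>j\<in>{0<..length s}. P (ent s j)) \<longleftrightarrow> (\<forall>y\<in>set s. P y)"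
proof -
  have "(\<forall>j\<in>{0<..length s}. P (ent s j)) \<longleftrightarrow> (\<forall>k<length s. P (s ! k))"
  proof
    assume all: "\<forall>j\<in>{0<..length s}. P (ent s j)"
    show "\<forall>k<length s. P (s ! k)"
    proof (intro allI impI)
      fix k assume "k < length s"
      then show "P (s ! k)" using all[rule_format, of "Suc k"] by (simp add: ent_def)
    qed
  qed (auto simp: ent_def)
  also have "\<dots> \<longleftrightarrow> (\<forall>y\<in>set s. P y)" by (simp add: all_set_conv_all_nth)
  finally show ?thesis .
qed

lemma card_rl_maxima:
  "card {i \<in> {1..length s}. \<forall>j\<in>{i<..length s}. ent s j < ent s i} = rl_maxima s"
proof (induction s)
  case Nil then show ?case by simp
next
  case (Cons x s)
  have "card {i \<in> {1..length (x # s)}. \<forall>j\<in>{i<..length (x # s)}. ent (x # s) j < ent (x # s) i}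
     = (if (\<forall>j\<in>{1<..Suc (length s)}. ent (x # s) j < x) then 1 else 0)
       + card {i \<in> {1..length s}. \<forall>j\<in>{Suc i<..Suc (length s)}. ent (x # s) j < ent s i}"
    by (simp only: length_Cons card_Suc_split) (simp add: Suc_le_eq cong: conj_cong)
  also have "{i \<in> {1..length s}. \<forall>j\<in>{Suc i<..Suc (length s)}. ent (x # s) j < ent s i}
      = {i \<in> {1..length s}. \<forall>j\<in>{i<..length s}. ent s j < ent s i}"
    by (intro Collect_cong conj_cong refl) (auto simp: ball_greaterThanAtMost_Suc_shift)
  also have "(\<forall>j\<in>{1<..Suc (length s)}. ent (x # s) j < x) = (\<forall>y\<in>set s. y < x)"
    using ball_greaterThanAtMost_Suc_shift[of 0 "length s" "\<lambda>j. ent (x # s) j < x"]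
      ball_ent_iff_ball_set[of s "\<lambda>y. y < x"] by simp
  finally show ?case using Cons.IH by simp
qed

lemma RLmax_eq_rl_maxima: "RLmax s = rl_maxima s"
  unfolding RLmax_def by (rule card_rl_maxima)

lemma lr_maxima_cong: "(\<forall>y\<in>set ys. M < y \<and> M' < y) \<Longrightarrow> lr_maxima M ys = lr_maxima M' ys"
  by (cases ys) auto

lemma lr_maxima_insert_one:
  assumes "\<forall>x\<in>set xs. 2 \<le> x" "\<forall>x\<in>set ys. 2 \<le> x"
  shows "lr_maxima M (xs @ 1 # ys) = lr_maxima M (xs @ ys) + (if xs = [] \<and> M = 0 then 1 else 0)"
  using assms(1)
proof (induction xs arbitrary: M)
  case Nil
  have "lr_maxima 1 ys = lr_maxima 0 ys" using assms(2) by (intro lr_maxima_cong) auto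
  then show ?case by simp
next
  case (Cons x xs)
  then show ?case by auto
qed

lemma lr_maxima_Suc_map: "lr_maxima (Suc M) (map Suc t) = lr_maxima M t"
  by (induction t arbitrary: M) auto

lemma lr_maxima_0_map: "pos_list t \<Longrightarrow> lr_maxima 0 (map Suc t) = lr_maxima 0 t"
  by (cases t) (auto simp: pos_list_def lr_maxima_Suc_map)

lemma rl_maxima_insert_one:
  assumes "\<forall>x\<in>set xs. 2 \<le> x" "\<forall>x\<in>set ys. 2 \<le> x"
  shows "rl_maxima (xs @ 1 # ys) = rl_maxima (xs @ ys) + (if ys = [] then 1 else 0)"
  using assms(1)
proof (induction xs)
  case Nil
  have "(\<forall>y\<in>set ys. y < 1) = (ys = [])" using assms(2) by (cases ys) auto
  then show ?case by simp
next
  case (Cons x xs)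
  then have "(\<forall>y\<in>set (xs @ 1 # ys). y < x) = (\<forall>y\<in>set (xs @ ys). y < x)" by auto
  then show ?case using Cons by simp
qed

lemma rl_maxima_map_Suc: "rl_maxima (map Suc t) = rl_maxima t"
  by (induction t) auto

lemma lr_maxima_ge_1: "pos_list s \<Longrightarrow> s \<noteq> [] \<Longrightarrow> 1 \<le> lr_maxima 0 s"
  by (cases s) (auto simp: pos_list_def)

lemma rl_maxima_ge_1: "s \<noteq> [] \<Longrightarrow> 1 \<le> rl_maxima s"
proof (induction s)
  case Nil then show ?case by simp
next
  case (Cons x s) then show ?case by (cases s) auto
qed

lemma LRmax_ins_min:
  assumes "t \<in> perms m" "1 \<le> m" "p \<le> m"
  shows "LRmax (ins_min t p) = LRmax t + (if p = 0 then 1 else 0)"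
proof -
  have pt: "pos_list t" using assms pos_list_perms by auto
  have lt: "length t = m" using length_perms[OF assms(1)] .
  have pi: "pos_list (ins_min t p)"
    using assms(1) by (intro pos_list_perms[of _ "Suc m"]) (simp add: ins_min_in_perms_iff)
  have g: "\<forall>x\<in>set (map Suc t). 2 \<le> x" using pt by (auto simp: pos_list_def)
  have "LRmax (ins_min t p) = lr_maxima 0 (take p (map Suc t) @ 1 # drop p (map Suc t))"
    using LRmax_eq_lr_maxima[OF pi] by (simp add: ins_min_def)
  also have "\<dots> = lr_maxima 0 (map Suc t) + (if take p (map Suc t) = [] then 1 else 0)"
    using g set_take_subset[of p "map Suc t"] set_drop_subset[of p "map Suc t"]
    by (subst lr_maxima_insert_one) (blast | simp)+
  also have "(take p (map Suc t) = []) = (p = 0)" using lt assms(2) by auto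
  finally show ?thesis using lr_maxima_0_map[OF pt] LRmax_eq_lr_maxima[OF pt] by simp
qed

lemma RLmax_ins_min:
  assumes "t \<in> perms m" "p \<le> m"
  shows "RLmax (ins_min t p) = RLmax t + (if p = m then 1 else 0)"
proof -
  have pt: "pos_list t" using assms pos_list_perms by auto
  have lt: "length t = m" using length_perms[OF assms(1)] .
  have g: "\<forall>x\<in>set (map Suc t). 2 \<le> x" using pt by (auto simp: pos_list_def)
  have "RLmax (ins_min t p) = rl_maxima (take p (map Suc t) @ 1 # drop p (map Suc t))"
    by (simp add: ins_min_def RLmax_eq_rl_maxima)
  also have "\<dots> = rl_maxima (map Suc t) + (if drop p (map Suc t) = [] then 1 else 0)"
    using g set_take_subset[of p "map Suc t"] set_drop_subset[of p "map Suc t"]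
    by (subst rl_maxima_insert_one) (blast | simp)+
  also have "(drop p (map Suc t) = []) = (p = m)" using lt assms(2) by auto
  finally show ?thesis using rl_maxima_map_Suc RLmax_eq_rl_maxima by simp
qed

lemma LRmax_ge_1: "t \<in> perms m \<Longrightarrow> 1 \<le> m \<Longrightarrow> 1 \<le> LRmax t"
  using LRmax_eq_lr_maxima lr_maxima_ge_1 pos_list_perms length_perms by (metis list.size(3) not_one_le_zero)

lemma RLmax_ge_1: "t \<in> perms m \<Longrightarrow> 1 \<le> m \<Longrightarrow> 1 \<le> RLmax t"
  using RLmax_eq_rl_maxima rl_maxima_ge_1 length_perms by (metis list.size(3) not_one_le_zero)

lemma stats_ins_min_front:
  assumes "t \<in> perms m" "1 \<le> m"
  shows "Vst (ins_min t 0) = Vst t" "Wst (ins_min t 0) = Wst t"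
    "lda (ins_min t 0) = Suc (lda t)" "rdd (ins_min t 0) = rdd t"
    "asc (ins_min t 0) = Suc (asc t)" "des (ins_min t 0) = des t"
  using stats_ins_min[OF assms(1), of 0] ent_perms_pos[OF assms(1), of 1]
    ent_perms_neq[OF assms(1), of 1 2] assms(2)
  by (auto simp: numeral_2_eq_2)

lemma stats_ins_min_back:
  assumes "t \<in> perms m" "1 \<le> m"
  shows "Vst (ins_min t m) = Vst t" "Wst (ins_min t m) = Wst t"
    "lda (ins_min t m) = lda t" "rdd (ins_min t m) = Suc (rdd t)"
    "asc (ins_min t m) = asc t" "des (ins_min t m) = Suc (des t)"
  using stats_ins_min[OF assms(1), of m] ent_perms_pos[OF assms(1), of m]
    ent_perms_neq[OF assms(1), of m "m - 1"] ent_perms_beyond[OF assms(1), of "Suc m"]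
    ent_perms_beyond[OF assms(1), of "Suc (Suc m)"] assms(2)
  by auto

lemma ent_perms_neighbours_neq:
  assumes "t \<in> perms m" "1 \<le> p" "p < m"
  shows "ent t p \<noteq> ent t (p - 1)" "ent t p \<noteq> ent t (Suc p)" "ent t (Suc p) \<noteq> ent t (Suc (Suc p))"
  by (rule ent_perms_neq[OF assms(1)]; use assms(2,3) in simp)+

lemma stats_ins_min_interior:
  assumes "t \<in> perms m" "1 \<le> p" "p < m"
  shows "(Vst (ins_min t p), Wst (ins_min t p), lda (ins_min t p), rdd (ins_min t p)) =
    (if ent t p < ent t (Suc p) then
       if ent t p < ent t (p - 1) then (Vst t, Wst t, lda t, Suc (rdd t))
       else (Suc (Vst t), Suc (Wst t), lda t - 1, rdd t)
     else if ent t (Suc p) < ent t (Suc (Suc p)) then (Vst t, Wst t, Suc (lda t), rdd t)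
     else (Suc (Vst t), Suc (Wst t), lda t, rdd t - 1))" (is ?P)
    and "(asc (ins_min t p), des (ins_min t p)) =
    (if ent t p < ent t (Suc p) then (asc t, Suc (des t)) else (Suc (asc t), des t))" (is ?A)
proof -
  have "ent t p \<noteq> ent t (Suc p)" "ent t (p - 1) \<noteq> ent t p" "ent t (Suc p) \<noteq> ent t (Suc (Suc p))"
    using ent_perms_neighbours_neq[OF assms] by auto
  moreover have "0 < ent t p" "0 < ent t (Suc p)"
    using ent_perms_pos[OF assms(1)] assms(2,3) by auto
  ultimately show ?P ?A
    using stats_ins_min[OF assms(1), of p] assms(3) by auto
qed

lemma card_valleys_at: "t \<in> perms m \<Longrightarrow> card {p \<in> {1..<m}. ent t p < ent t (Suc p) \<and> ent t p < ent t (p - 1)} = Vst t"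
  unfolding Vst_def using length_perms[of t m]
  by (intro arg_cong[where f = card]) (auto dest: ent_less_imp_in_range)

lemma card_lda_at: "t \<in> perms m \<Longrightarrow> card {p \<in> {1..<m}. ent t p < ent t (Suc p) \<and> ent t (p - 1) < ent t p} = lda t"
  unfolding lda_def using length_perms[of t m]
  by (intro arg_cong[where f = card]) auto

lemma card_Suc_shift: "card {p \<in> {1..<m}. Q (Suc p)} = card {i \<in> {1<..m}. Q i}"
proof -
  have "{i \<in> {1<..m}. Q i} = Suc ` {p \<in> {1..<m}. Q (Suc p)}"
    by (auto simp: image_iff) (metis Suc_pred' Suc_less_eq gr_implies_not0 less_Suc_eq_le neq0_conv)
  then show ?thesis by (simp add: card_image)
qed

lemma card_valleys_after:
  assumes "t \<in> perms m"
  shows "card {p \<in> {1..<m}. ent t (Suc p) < ent t p \<and> ent t (Suc p) < ent t (Suc (Suc p))} = Vst t"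
proof -
  have "card {p \<in> {1..<m}. ent t (Suc p) < ent t p \<and> ent t (Suc p) < ent t (Suc (Suc p))}
      = card {i \<in> {1<..m}. ent t i < ent t (i - 1) \<and> ent t i < ent t (Suc i)}"
    using card_Suc_shift[of m "\<lambda>i. ent t i < ent t (i - 1) \<and> ent t i < ent t (Suc i)"] by simp
  also have "\<dots> = Vst t"
    unfolding Vst_def using length_perms[OF assms]
    by (intro arg_cong[where f = card]) (auto dest: ent_less_imp_in_range)
  finally show ?thesis .
qed

lemma card_rdd_after:
  assumes "t \<in> perms m"
  shows "card {p \<in> {1..<m}. ent t (Suc p) < ent t p \<and> ent t (Suc (Suc p)) < ent t (Suc p)} = rdd t"
proof -
  have "card {p \<in> {1..<m}. ent t (Suc p) < ent t p \<and> ent t (Suc (Suc p)) < ent t (Suc p)}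
      = card {i \<in> {1<..m}. ent t i < ent t (i - 1) \<and> ent t (Suc i) < ent t i}"
    using card_Suc_shift[of m "\<lambda>i. ent t i < ent t (i - 1) \<and> ent t (Suc i) < ent t i"] by simp
  also have "\<dots> = rdd t"
    unfolding rdd_def using length_perms[OF assms] by (intro arg_cong[where f = card]) auto
  finally show ?thesis .
qed

lemma card_asc_at: "t \<in> perms m \<Longrightarrow> card {p \<in> {1..<m}. ent t p < ent t (Suc p)} = asc t"
  unfolding asc_def using length_perms[of t m] by simp

lemma card_des_at: "t \<in> perms m \<Longrightarrow> card {p \<in> {1..<m}. ent t (Suc p) < ent t p} = des t"
  unfolding des_def using length_perms[of t m] by simp

lemma sum_if_const:
  "finite I \<Longrightarrow> (\<Sum>p\<in>I. if P p then x else 0) = of_nat (card {p \<in> I. P p}) * (x :: 'a::comm_ring_1)"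
  by (simp add: sum.inter_filter[symmetric])

section \<open>The insertion recursions\<close>

definition max_weight :: "'a::comm_ring_1 \<Rightarrow> 'a \<Rightarrow> nat list \<Rightarrow> 'a" where
  "max_weight \<alpha> \<beta> s = \<alpha> ^ (LRmax s - 1) * \<beta> ^ (RLmax s - 1)"

lemma max_weight_ins_min:
  assumes "t \<in> perms m" "1 \<le> m" "p \<le> m"
  shows "max_weight \<alpha> \<beta> (ins_min t p) = (if p = 0 then \<alpha> else if p = m then \<beta> else 1) * max_weight \<alpha> \<beta> t"
proof -
  have "1 \<le> LRmax t" "1 \<le> RLmax t" using LRmax_ge_1 RLmax_ge_1 assms(1,2) by auto
  then show ?thesis
    using LRmax_ins_min[OF assms] RLmax_ins_min[OF assms(1,3)] assms(2)
    by (auto simp: max_weight_def power_eq_if)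
qed

lemma sum_atMost_split_ends:
  assumes "1 \<le> (m::nat)"
  shows "(\<Sum>p\<le>m. F p) = F 0 + F m + (\<Sum>p\<in>{1..<m}. F p)"
proof -
  have "{..m} = insert 0 (insert m {1..<m})" using assms by auto
  then show ?thesis using assms by (simp add: algebra_simps)
qed

lemma sum_ins_min_max_weight:
  assumes "t \<in> perms m" "1 \<le> m"
  shows "(\<Sum>p\<le>m. max_weight \<alpha> \<beta> (ins_min t p) * F (ins_min t p))
    = max_weight \<alpha> \<beta> t * (\<alpha> * F (ins_min t 0) + \<beta> * F (ins_min t m) + (\<Sum>p\<in>{1..<m}. F (ins_min t p)))"
proof -
  have interior: "(\<Sum>p\<in>{1..<m}. max_weight \<alpha> \<beta> (ins_min t p) * F (ins_min t p))
      = max_weight \<alpha> \<beta> t * (\<Sum>p\<in>{1..<m}. F (ins_min t p))"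
    unfolding sum_distrib_left by (intro sum.cong refl) (simp add: max_weight_ins_min[OF assms])
  have ends: "max_weight \<alpha> \<beta> (ins_min t 0) = \<alpha> * max_weight \<alpha> \<beta> t"
    "max_weight \<alpha> \<beta> (ins_min t m) = \<beta> * max_weight \<alpha> \<beta> t"
    using max_weight_ins_min[OF assms, of 0] max_weight_ins_min[OF assms, of m] assms(2) by simp_all
  show ?thesis
    unfolding sum_atMost_split_ends[OF assms(2)] interior ends by (simp add: algebra_simps)
qed

text \<open>\<open>P_step \<alpha> \<beta> g\<close> at the statistics \<open>(V, W, lda, rdd)\<close> of a permutation sums \<open>g\<close> over the
  statistics of its insertions of a new minimum, weighted as in \<open>max_weight\<close>: at the front
  (factor \<open>\<alpha>\<close>, a new double ascent), at the back (factor \<open>\<beta>\<close>, a new double descent), and into the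
  interior gaps, of which \<open>V\<close> lie directly after a valley, \<open>lda\<close> directly after a double ascent,
  \<open>V\<close> directly before a valley and \<open>rdd\<close> directly before a double descent.  \<open>A_step\<close> is the
  analogue for \<open>(asc, des)\<close>.\<close>

definition P_step :: "'a::comm_ring_1 \<Rightarrow> 'a \<Rightarrow> (nat \<Rightarrow> nat \<Rightarrow> nat \<Rightarrow> nat \<Rightarrow> 'a) \<Rightarrow> nat \<Rightarrow> nat \<Rightarrow> nat \<Rightarrow> nat \<Rightarrow> 'a" where
  "P_step a b g v w l r = a * g v w (Suc l) r + b * g v w l (Suc r)
     + of_nat v * g v w l (Suc r) + of_nat l * g (Suc v) (Suc w) (l - 1) r
     + of_nat v * g v w (Suc l) r + of_nat r * g (Suc v) (Suc w) l (r - 1)"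

definition A_step :: "'a::comm_ring_1 \<Rightarrow> 'a \<Rightarrow> (nat \<Rightarrow> nat \<Rightarrow> 'a) \<Rightarrow> nat \<Rightarrow> nat \<Rightarrow> 'a" where
  "A_step a b h as ds = a * h (Suc as) ds + b * h as (Suc ds) + of_nat as * h as (Suc ds) + of_nat ds * h (Suc as) ds"

lemma sum_P_step_interior:
  fixes g :: "nat \<Rightarrow> nat \<Rightarrow> nat \<Rightarrow> nat \<Rightarrow> 'a::comm_ring_1"
  assumes t: "t \<in> perms m"
  shows "(\<Sum>p\<in>{1..<m}. g (Vst (ins_min t p)) (Wst (ins_min t p)) (lda (ins_min t p)) (rdd (ins_min t p)))
    = of_nat (Vst t) * g (Vst t) (Wst t) (lda t) (Suc (rdd t))
    + of_nat (lda t) * g (Suc (Vst t)) (Suc (Wst t)) (lda t - 1) (rdd t)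
    + of_nat (Vst t) * g (Vst t) (Wst t) (Suc (lda t)) (rdd t)
    + of_nat (rdd t) * g (Suc (Vst t)) (Suc (Wst t)) (lda t) (rdd t - 1)"
proof -
  define C1 where "C1 p \<longleftrightarrow> ent t p < ent t (Suc p) \<and> ent t p < ent t (p - 1)" for p
  define C2 where "C2 p \<longleftrightarrow> ent t p < ent t (Suc p) \<and> ent t (p - 1) < ent t p" for p
  define C3 where "C3 p \<longleftrightarrow> ent t (Suc p) < ent t p \<and> ent t (Suc p) < ent t (Suc (Suc p))" for p
  define C4 where "C4 p \<longleftrightarrow> ent t (Suc p) < ent t p \<and> ent t (Suc (Suc p)) < ent t (Suc p)" for p
  define k1 where "k1 = g (Vst t) (Wst t) (lda t) (Suc (rdd t))"
  define k2 where "k2 = g (Suc (Vst t)) (Suc (Wst t)) (lda t - 1) (rdd t)"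
  define k3 where "k3 = g (Vst t) (Wst t) (Suc (lda t)) (rdd t)"
  define k4 where "k4 = g (Suc (Vst t)) (Suc (Wst t)) (lda t) (rdd t - 1)"
  have "g (Vst (ins_min t p)) (Wst (ins_min t p)) (lda (ins_min t p)) (rdd (ins_min t p))
      = (if C1 p then k1 else 0) + (if C2 p then k2 else 0) + (if C3 p then k3 else 0) + (if C4 p then k4 else 0)"
    if "p \<in> {1..<m}" for p
    using stats_ins_min_interior(1)[OF t, of p] ent_perms_neighbours_neq[OF t, of p] that
    unfolding C1_def C2_def C3_def C4_def k1_def k2_def k3_def k4_def
    by (auto split: if_splits)
  then have "(\<Sum>p\<in>{1..<m}. g (Vst (ins_min t p)) (Wst (ins_min t p)) (lda (ins_min t p)) (rdd (ins_min t p)))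
     = (\<Sum>p\<in>{1..<m}. if C1 p then k1 else 0) + (\<Sum>p\<in>{1..<m}. if C2 p then k2 else 0)
      + (\<Sum>p\<in>{1..<m}. if C3 p then k3 else 0) + (\<Sum>p\<in>{1..<m}. if C4 p then k4 else 0)"
    by (simp add: sum.distrib)
  also have "\<dots> = of_nat (Vst t) * k1 + of_nat (lda t) * k2 + of_nat (Vst t) * k3 + of_nat (rdd t) * k4"
    unfolding sum_if_const[OF finite_atLeastLessThan] C1_def C2_def C3_def C4_def
    using card_valleys_at[OF t] card_lda_at[OF t] card_valleys_after[OF t] card_rdd_after[OF t] by simp
  finally show ?thesis unfolding k1_def k2_def k3_def k4_def .
qed

lemma sum_A_step_interior:
  fixes h :: "nat \<Rightarrow> nat \<Rightarrow> 'a::comm_ring_1"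
  assumes t: "t \<in> perms m"
  shows "(\<Sum>p\<in>{1..<m}. h (asc (ins_min t p)) (des (ins_min t p)))
    = of_nat (asc t) * h (asc t) (Suc (des t)) + of_nat (des t) * h (Suc (asc t)) (des t)"
proof -
  have "h (asc (ins_min t p)) (des (ins_min t p))
      = (if ent t p < ent t (Suc p) then h (asc t) (Suc (des t)) else 0)
      + (if ent t (Suc p) < ent t p then h (Suc (asc t)) (des t) else 0)"
    if "p \<in> {1..<m}" for p
    using stats_ins_min_interior(2)[OF t, of p] ent_perms_neighbours_neq[OF t, of p] that by auto
  then have "(\<Sum>p\<in>{1..<m}. h (asc (ins_min t p)) (des (ins_min t p)))
      = (\<Sum>p\<in>{1..<m}. if ent t p < ent t (Suc p) then h (asc t) (Suc (des t)) else 0)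
      + (\<Sum>p\<in>{1..<m}. if ent t (Suc p) < ent t p then h (Suc (asc t)) (des t) else 0)"
    by (simp add: sum.distrib)
  also have "\<dots> = of_nat (asc t) * h (asc t) (Suc (des t)) + of_nat (des t) * h (Suc (asc t)) (des t)"
    unfolding sum_if_const[OF finite_atLeastLessThan] card_asc_at[OF t] card_des_at[OF t] ..
  finally show ?thesis .
qed

lemma sum_ins_min_P_weight:
  assumes "t \<in> perms m" "1 \<le> m"
  shows "(\<Sum>p\<le>m. max_weight \<alpha> \<beta> (ins_min t p) *
           g (Vst (ins_min t p)) (Wst (ins_min t p)) (lda (ins_min t p)) (rdd (ins_min t p)))
    = max_weight \<alpha> \<beta> t * P_step \<alpha> \<beta> g (Vst t) (Wst t) (lda t) (rdd t)"
  unfolding sum_ins_min_max_weight[OF assms, where F = "\<lambda>s. g (Vst s) (Wst s) (lda s) (rdd s)"]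
    sum_P_step_interior[OF assms(1)]
    stats_ins_min_front[OF assms] stats_ins_min_back[OF assms]
  by (simp add: P_step_def algebra_simps)

lemma sum_ins_min_A_weight:
  assumes "t \<in> perms m" "1 \<le> m"
  shows "(\<Sum>p\<le>m. max_weight \<alpha> \<beta> (ins_min t p) * h (asc (ins_min t p)) (des (ins_min t p)))
    = max_weight \<alpha> \<beta> t * A_step \<alpha> \<beta> h (asc t) (des t)"
  unfolding sum_ins_min_max_weight[OF assms, where F = "\<lambda>s. h (asc s) (des s)"]
    sum_A_step_interior[OF assms(1)]
    stats_ins_min_front[OF assms] stats_ins_min_back[OF assms]
  by (simp add: A_step_def algebra_simps)

definition P_sum :: "'a::comm_ring_1 \<Rightarrow> 'a \<Rightarrow> (nat \<Rightarrow> nat \<Rightarrow> nat \<Rightarrow> nat \<Rightarrow> 'a) \<Rightarrow> nat \<Rightarrow> 'a" where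
  "P_sum \<alpha> \<beta> g m = (\<Sum>s\<in>perms m. max_weight \<alpha> \<beta> s * g (Vst s) (Wst s) (lda s) (rdd s))"

definition A_sum :: "'a::comm_ring_1 \<Rightarrow> 'a \<Rightarrow> (nat \<Rightarrow> nat \<Rightarrow> 'a) \<Rightarrow> nat \<Rightarrow> 'a" where
  "A_sum \<alpha> \<beta> h m = (\<Sum>s\<in>perms m. max_weight \<alpha> \<beta> s * h (asc s) (des s))"

lemma P_sum_Suc: "1 \<le> m \<Longrightarrow> P_sum \<alpha> \<beta> g (Suc m) = P_sum \<alpha> \<beta> (P_step \<alpha> \<beta> g) m"
  unfolding P_sum_def sum_perms_Suc by (intro sum.cong refl) (rule sum_ins_min_P_weight)

lemma A_sum_Suc: "1 \<le> m \<Longrightarrow> A_sum \<alpha> \<beta> h (Suc m) = A_sum \<alpha> \<beta> (A_step \<alpha> \<beta> h) m"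
  unfolding A_sum_def sum_perms_Suc by (intro sum.cong refl) (rule sum_ins_min_A_weight)

lemma perms_one: "perms 1 = {[1]}"
proof
  show "{[1]} \<subseteq> perms 1" by (simp add: perms_def)
next
  show "perms 1 \<subseteq> {[1]}"
  proof
    fix s assume s: "s \<in> perms 1"
    then have "length s = 1" by (rule length_perms)
    then obtain x where "s = [x]" by (cases s) auto
    moreover have "set s = {1}" using s by (simp add: perms_def)
    ultimately show "s \<in> {[1]}" by simp
  qed
qed

lemma perms_Suc_0: "perms (Suc 0) = {[Suc 0]}" using perms_one by simp

lemma stats_singleton: "Vst [1] = 0" "Wst [1] = 1" "lda [1] = 0" "rdd [1] = 0" "asc [1] = 0" "des [1] = 0"
  "LRmax [1] = 1" "RLmax [1] = 1"
proof -
  have p: "pos_list [1]" by (simp add: pos_list_def)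
  show "Vst [1] = 0" by (simp add: Vst_def)
  show "lda [1] = 0" by (simp add: lda_def)
  show "rdd [1] = 0" by (simp add: rdd_def)
  show "asc [1] = 0" by (simp add: asc_def)
  show "des [1] = 0" by (simp add: des_def)
  have "{i \<in> {1..length [1::nat]}. ent [1] (i - 1) < ent [1] i \<and> ent [1] (i + 1) < ent [1] i} = {1}"
    by (auto simp: ent_def)
  then show "Wst [1] = 1" by (simp add: Wst_def)
  show "LRmax [1] = 1" using LRmax_eq_lr_maxima[OF p] by simp
  show "RLmax [1] = 1" using RLmax_eq_rl_maxima by simp
qed

lemma P_sum_eq_funpow: "P_sum \<alpha> \<beta> g (Suc n) = (P_step \<alpha> \<beta> ^^ n) g 0 1 0 0"
proof (induction n arbitrary: g)
  case 0 then show ?case by (simp add: P_sum_def perms_Suc_0 stats_singleton[simplified] max_weight_def)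
next
  case (Suc n)
  have "P_sum \<alpha> \<beta> g (Suc (Suc n)) = P_sum \<alpha> \<beta> (P_step \<alpha> \<beta> g) (Suc n)" by (rule P_sum_Suc) simp
  also have "\<dots> = (P_step \<alpha> \<beta> ^^ n) (P_step \<alpha> \<beta> g) 0 1 0 0" by (rule Suc.IH)
  also have "\<dots> = (P_step \<alpha> \<beta> ^^ Suc n) g 0 1 0 0" by (simp only: funpow_Suc_right o_apply)
  finally show ?case .
qed

lemma A_sum_eq_funpow: "A_sum \<alpha> \<beta> h (Suc n) = (A_step \<alpha> \<beta> ^^ n) h 0 0"
proof (induction n arbitrary: h)
  case 0 then show ?case by (simp add: A_sum_def perms_Suc_0 stats_singleton[simplified] max_weight_def)
next
  case (Suc n)
  have "A_sum \<alpha> \<beta> h (Suc (Suc n)) = A_sum \<alpha> \<beta> (A_step \<alpha> \<beta> h) (Suc n)" by (rule A_sum_Suc) simp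
  also have "\<dots> = (A_step \<alpha> \<beta> ^^ n) (A_step \<alpha> \<beta> h) 0 0" by (rule Suc.IH)
  also have "\<dots> = (A_step \<alpha> \<beta> ^^ Suc n) h 0 0" by (simp only: funpow_Suc_right o_apply)
  finally show ?case .
qed

lemma Ppoly_eq_P_sum:
  fixes u1 u2 u3 u4 \<alpha> \<beta> :: "'a::comm_ring_1"
  shows "Ppoly n u1 u2 u3 u4 \<alpha> \<beta> = P_sum \<alpha> \<beta> (\<lambda>v w l r. u1 ^ v * u2 ^ (w - 1) * u3 ^ r * u4 ^ l) (Suc n)"
  unfolding Ppoly_def P_sum_def max_weight_def by (intro sum.cong) (simp_all add: algebra_simps)

lemma Apoly_eq_A_sum:
  fixes x y \<alpha> \<beta> :: "'a::comm_ring_1"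
  shows "Apoly n x y \<alpha> \<beta> = A_sum \<alpha> \<beta> (\<lambda>a d. x ^ a * y ^ d) (Suc n)"
  unfolding Apoly_def A_sum_def max_weight_def by (intro sum.cong) (simp_all add: algebra_simps)

section \<open>Splitting and symmetrising the recursions\<close>

definition lr_diff :: "(nat \<Rightarrow> nat \<Rightarrow> nat \<Rightarrow> nat \<Rightarrow> 'a::comm_ring_1) \<Rightarrow> nat \<Rightarrow> nat \<Rightarrow> nat \<Rightarrow> nat \<Rightarrow> 'a" where
  "lr_diff g v w l r = g v w l (Suc r) - g v w (Suc l) r"

lemma lr_diff_P_step: "lr_diff (P_step c c g) = P_step c c (lr_diff g)"
proof (intro ext)
  fix v w l r
  show "lr_diff (P_step c c g) v w l r = P_step c c (lr_diff g) v w l r"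
    by (cases l; cases r) (simp_all add: lr_diff_def P_step_def algebra_simps)
qed

lemma P_step_split: "P_step (c - d) (c + d) g v w l r = P_step c c g v w l r + d * lr_diff g v w l r"
  by (simp add: P_step_def lr_diff_def algebra_simps)

lemma P_step_sum: "P_step a b (\<lambda>v w l r. \<Sum>k\<in>A. f k v w l r) = (\<lambda>v w l r. \<Sum>k\<in>A. P_step a b (f k) v w l r)"
  by (intro ext) (simp add: P_step_def sum.distrib sum_distrib_left)

lemma P_step_scale: "P_step a b (\<lambda>v w l r. e * g v w l r) = (\<lambda>v w l r. e * P_step a b g v w l r)"
  by (intro ext) (simp add: P_step_def algebra_simps)

lemma lr_diff_funpow_P_step:
  assumes "lr_diff g = (\<lambda>v w l r. e * g v w l r)"
  shows "lr_diff ((P_step c c ^^ k) g) = (\<lambda>v w l r. e * (P_step c c ^^ k) g v w l r)"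
proof (induction k)
  case 0 then show ?case using assms by simp
next
  case (Suc k)
  then show ?case by (simp add: lr_diff_P_step P_step_scale)
qed

lemma sum_binomial_pascal:
  fixes Z :: "nat \<Rightarrow> nat \<Rightarrow> 'a::comm_ring_1"
  shows "(\<Sum>r\<le>i. of_nat (i choose r) * (Z (Suc (i - r)) r + Z (i - r) (Suc r)))
       = (\<Sum>r\<le>Suc i. of_nat (Suc i choose r) * Z (Suc i - r) r)"
proof -
  have R: "(\<Sum>r\<le>Suc i. of_nat (Suc i choose r) * Z (Suc i - r) r)
      = Z (Suc i) 0 + (\<Sum>r\<le>i. of_nat (i choose r) * Z (i - r) (Suc r))
        + (\<Sum>r\<le>i. of_nat (i choose Suc r) * Z (i - r) (Suc r))"
    by (subst sum.atMost_Suc_shift) (simp add: sum.distrib algebra_simps)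
  have L1: "(\<Sum>r\<le>i. of_nat (i choose r) * Z (Suc (i - r)) r)
      = Z (Suc i) 0 + (\<Sum>r<i. of_nat (i choose Suc r) * Z (i - r) (Suc r))"
  proof -
    have "(\<Sum>r\<le>i. of_nat (i choose r) * Z (Suc (i - r)) r)
        = of_nat (i choose 0) * Z (Suc (i - 0)) 0 + (\<Sum>r<i. of_nat (i choose Suc r) * Z (Suc (i - Suc r)) (Suc r))"
      by (rule sum.atMost_shift)
    also have "(\<Sum>r<i. of_nat (i choose Suc r) * Z (Suc (i - Suc r)) (Suc r))
        = (\<Sum>r<i. of_nat (i choose Suc r) * Z (i - r) (Suc r))"
      by (intro sum.cong refl) (simp add: Suc_diff_Suc)
    finally show ?thesis by simp
  qed
  have L2: "(\<Sum>r\<le>i. of_nat (i choose Suc r) * Z (i - r) (Suc r))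
      = (\<Sum>r<i. of_nat (i choose Suc r) * Z (i - r) (Suc r))"
    by (simp add: lessThan_Suc_atMost[symmetric] binomial_eq_0 del: lessThan_Suc_atMost)
  show ?thesis using R L1 L2 by (simp add: sum.distrib algebra_simps)
qed

lemma sum_binomial_absorb_left:
  fixes Z :: "nat \<Rightarrow> nat \<Rightarrow> 'a::comm_ring_1"
  shows "(\<Sum>r\<le>Suc n. of_nat (Suc n choose r) * (of_nat (Suc n - r) * Z (n - r) r))
       = of_nat (Suc n) * (\<Sum>r\<le>n. of_nat (n choose r) * Z (n - r) r)"
proof -
  have absorb: "of_nat (Suc n choose r) * of_nat (Suc n - r) = (of_nat (Suc n) * of_nat (n choose r) :: 'a)" for r
  proof -
    have "(Suc n - r) * (Suc n choose r) = Suc n * (n choose r)"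
      using binomial_absorb_comp[of "Suc n" r] by simp
    then show ?thesis by (metis of_nat_mult mult.commute)
  qed
  have "(\<Sum>r\<le>Suc n. of_nat (Suc n choose r) * (of_nat (Suc n - r) * Z (n - r) r))
      = of_nat (Suc n) * (\<Sum>r\<le>Suc n. of_nat (n choose r) * Z (n - r) r)"
    by (simp only: sum_distrib_left mult.assoc[symmetric] absorb)
  also have "(\<Sum>r\<le>Suc n. of_nat (n choose r) * Z (n - r) r) = (\<Sum>r\<le>n. of_nat (n choose r) * Z (n - r) r)"
    by (simp add: binomial_eq_0)
  finally show ?thesis .
qed

lemma sum_binomial_absorb_right:
  fixes Z :: "nat \<Rightarrow> nat \<Rightarrow> 'a::comm_ring_1"
  shows "(\<Sum>r\<le>Suc n. of_nat (Suc n choose r) * (of_nat r * Z (Suc n - r) (r - 1)))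
       = of_nat (Suc n) * (\<Sum>r\<le>n. of_nat (n choose r) * Z (n - r) r)"
proof -
  have absorb: "of_nat (Suc n choose Suc r) * of_nat (Suc r) = (of_nat (Suc n) * of_nat (n choose r) :: 'a)" for r
  proof -
    have "Suc r * (Suc n choose Suc r) = Suc n * (n choose r)"
      using binomial_absorption[of r "Suc n"] by simp
    then show ?thesis by (metis of_nat_mult mult.commute)
  qed
  have "(\<Sum>r\<le>Suc n. of_nat (Suc n choose r) * (of_nat r * Z (Suc n - r) (r - 1)))
      = (\<Sum>r\<le>n. of_nat (Suc n choose Suc r) * (of_nat (Suc r) * Z (n - r) r))"
    by (subst sum.atMost_Suc_shift) simp
  also have "\<dots> = of_nat (Suc n) * (\<Sum>r\<le>n. of_nat (n choose r) * Z (n - r) r)"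
    by (simp only: sum_distrib_left mult.assoc[symmetric] absorb)
  finally show ?thesis .
qed

lemma sum_binomial_absorb:
  fixes Z :: "nat \<Rightarrow> nat \<Rightarrow> 'a::comm_ring_1"
  shows "(\<Sum>r\<le>i. of_nat (i choose r) * (of_nat (i - r) * Z (i - r - 1) r + of_nat r * Z (i - r) (r - 1)))
       = 2 * of_nat i * (\<Sum>r\<le>i - 1. of_nat ((i - 1) choose r) * Z (i - 1 - r) r)"
proof (cases i)
  case (Suc n)
  have "Suc n - r - 1 = n - r" for r by simp
  then have "(\<Sum>r\<le>i. of_nat (i choose r) * (of_nat (i - r) * Z (i - r - 1) r + of_nat r * Z (i - r) (r - 1)))
      = (\<Sum>r\<le>Suc n. of_nat (Suc n choose r) * (of_nat (Suc n - r) * Z (n - r) r))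
      + (\<Sum>r\<le>Suc n. of_nat (Suc n choose r) * (of_nat r * Z (Suc n - r) (r - 1)))"
    unfolding Suc distrib_left sum.distrib by (simp only:)
  also have "\<dots> = 2 * of_nat (Suc n) * (\<Sum>r\<le>n. of_nat (n choose r) * Z (n - r) r)"
    unfolding sum_binomial_absorb_left sum_binomial_absorb_right by (simp only: mult_2 distrib_right)
  finally show ?thesis by (simp only: Suc diff_Suc_1)
qed simp

lemma P_step_funpow_binomial:
  assumes "lr_diff g = (\<lambda>v w l r. e * g v w l r)"
  shows "(P_step (c - d) (c + d) ^^ n) g =
     (\<lambda>v w l r. \<Sum>k\<le>n. of_nat (n choose k) * (d * e) ^ (n - k) * (P_step c c ^^ k) g v w l r)"
proof (induction n)
  case 0 then show ?case by simp
next
  case (Suc n)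
  define G where "G k = (P_step c c ^^ k) g" for k
  have step: "P_step (c - d) (c + d) (G k) v w l r = G (Suc k) v w l r + d * e * G k v w l r" for k v w l r
    using P_step_split[of c d "G k"] lr_diff_funpow_P_step[OF assms, where c = c and k = k] by (simp add: G_def)
  show ?case
  proof (intro ext)
    fix v w l r
    have "(P_step (c - d) (c + d) ^^ Suc n) g v w l r
        = (\<Sum>k\<le>n. of_nat (n choose k) * ((d * e) ^ Suc (n - k) * G k v w l r + (d * e) ^ (n - k) * G (Suc k) v w l r))"
      by (simp add: Suc.IH G_def[symmetric] P_step_sum P_step_scale step algebra_simps)
    also have "\<dots> = (\<Sum>k\<le>Suc n. of_nat (Suc n choose k) * ((d * e) ^ (Suc n - k) * G k v w l r))"
      using sum_binomial_pascal[of n "\<lambda>a b. (d * e) ^ a * G b v w l r"] by simp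
    finally show "(P_step (c - d) (c + d) ^^ Suc n) g v w l r
        = (\<Sum>k\<le>Suc n. of_nat (Suc n choose k) * (d * e) ^ (Suc n - k) * (P_step c c ^^ k) g v w l r)"
      by (simp add: G_def mult.assoc)
  qed
qed

text \<open>\<open>sym_step c\<close> is the common form taken by \<open>P_step c c\<close> and \<open>A_step c c\<close> after binomial
  symmetrisation over \<open>(lda, rdd)\<close> resp. \<open>(asc, des)\<close>, written in the basis of the monomials
  \<open>e\<^sub>1\<^sup>i e\<^sub>2\<^sup>j\<close> in the two elementary symmetric functions.\<close>

definition sym_monomial :: "'a::comm_ring_1 \<Rightarrow> 'a \<Rightarrow> nat \<Rightarrow> nat \<Rightarrow> 'a" where
  "sym_monomial s p i j = s ^ i * p ^ j"

definition sym_step :: "'a::comm_ring_1 \<Rightarrow> (nat \<Rightarrow> nat \<Rightarrow> 'a) \<Rightarrow> nat \<Rightarrow> nat \<Rightarrow> 'a" where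
  "sym_step c h i j = c * h (Suc i) j + 2 * of_nat i * h (i - 1) (Suc j) + of_nat j * h (Suc i) j"

lemma sum_binomial_sym_step:
  fixes Y Y' :: "nat \<Rightarrow> nat \<Rightarrow> 'a::comm_ring_1"
  assumes pt: "\<And>r. r \<le> i \<Longrightarrow> F r = (c + of_nat j) * (Y (Suc (i - r)) r + Y (i - r) (Suc r))
        + (of_nat (i - r) * Y' (i - r - 1) r + of_nat r * Y' (i - r) (r - 1))"
  and IH1: "(\<Sum>r\<le>Suc i. of_nat (Suc i choose r) * Y (Suc i - r) r) = H (Suc i) j"
  and IH2: "(\<Sum>r\<le>i - 1. of_nat ((i - 1) choose r) * Y' (i - 1 - r) r) = H (i - 1) (Suc j)"
  shows "(\<Sum>r\<le>i. of_nat (i choose r) * F r) = sym_step c H i j"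
proof -
  have "(\<Sum>r\<le>i. of_nat (i choose r) * F r) =
     (\<Sum>r\<le>i. (c + of_nat j) * (of_nat (i choose r) * (Y (Suc (i - r)) r + Y (i - r) (Suc r))))
     + (\<Sum>r\<le>i. of_nat (i choose r) * (of_nat (i - r) * Y' (i - r - 1) r + of_nat r * Y' (i - r) (r - 1)))"
    by (simp add: pt sum.distrib distrib_left mult.left_commute)
  also have "\<dots> = (c + of_nat j) * H (Suc i) j + 2 * of_nat i * H (i - 1) (Suc j)"
    by (simp only: sum_distrib_left[symmetric] sum_binomial_pascal sum_binomial_absorb IH1 IH2)
  finally show ?thesis by (simp add: sym_step_def algebra_simps)
qed

lemma P_step_funpow_sym_step:
  fixes a b x y c :: "'a::comm_ring_1"
  defines "g \<equiv> \<lambda>v w l r. a ^ v * b ^ (w - 1) * x ^ r * y ^ l"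
  shows "(\<Sum>r\<le>i. of_nat (i choose r) * (P_step c c ^^ k) g j (Suc j) (i - r) r)
       = (sym_step c ^^ k) (sym_monomial (x + y) (a * b)) i j"
proof (induction k arbitrary: i j)
  case 0
  have "(\<Sum>r\<le>i. of_nat (i choose r) * g j (Suc j) (i - r) r)
     = (\<Sum>r\<le>i. (a * b) ^ j * (of_nat (i choose r) * x ^ r * y ^ (i - r)))"
    by (intro sum.cong refl) (simp add: g_def power_mult_distrib algebra_simps)
  also have "\<dots> = (x + y) ^ i * (a * b) ^ j"
    by (simp add: binomial_ring sum_distrib_left[symmetric] mult.commute)
  finally show ?case by (simp add: sym_monomial_def)
next
  case (Suc k)
  define Z where "Z = (P_step c c ^^ k) g"
  show ?case
    unfolding funpow.simps o_apply Z_def[symmetric]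
  proof (rule sum_binomial_sym_step[where Y = "Z j (Suc j)" and Y' = "Z (Suc j) (Suc (Suc j))"])
    fix r assume "r \<le> i"
    show "P_step c c Z j (Suc j) (i - r) r = (c + of_nat j) * (Z j (Suc j) (Suc (i - r)) r + Z j (Suc j) (i - r) (Suc r))
        + (of_nat (i - r) * Z (Suc j) (Suc (Suc j)) (i - r - 1) r + of_nat r * Z (Suc j) (Suc (Suc j)) (i - r) (r - 1))"
      by (simp add: P_step_def algebra_simps)
  next
    show "(\<Sum>r\<le>Suc i. of_nat (Suc i choose r) * Z j (Suc j) (Suc i - r) r) = (sym_step c ^^ k) (sym_monomial (x + y) (a * b)) (Suc i) j"
      using Suc.IH[of "Suc i" j] unfolding Z_def .
  next
    show "(\<Sum>r\<le>i - 1. of_nat ((i - 1) choose r) * Z (Suc j) (Suc (Suc j)) (i - 1 - r) r) = (sym_step c ^^ k) (sym_monomial (x + y) (a * b)) (i - 1) (Suc j)"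
      using Suc.IH[of "i - 1" "Suc j"] unfolding Z_def .
  qed
qed

lemma A_step_funpow_sym_step:
  fixes x y c :: "'a::comm_ring_1"
  defines "h \<equiv> \<lambda>a d. x ^ a * y ^ d"
  shows "(\<Sum>r\<le>i. of_nat (i choose r) * (A_step c c ^^ k) h (r + j) (i - r + j))
       = (sym_step c ^^ k) (sym_monomial (x + y) (x * y)) i j"
proof (induction k arbitrary: i j)
  case 0
  have "(\<Sum>r\<le>i. of_nat (i choose r) * h (r + j) (i - r + j))
     = (\<Sum>r\<le>i. (x * y) ^ j * (of_nat (i choose r) * x ^ r * y ^ (i - r)))"
    unfolding h_def by (intro sum.cong refl) (simp only: power_add power_mult_distrib, simp add: algebra_simps)
  also have "\<dots> = (x + y) ^ i * (x * y) ^ j"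
    by (simp add: binomial_ring sum_distrib_left[symmetric] mult.commute)
  finally show ?case by (simp add: sym_monomial_def)
next
  case (Suc k)
  define Z where "Z = (A_step c c ^^ k) h"
  show ?case
    unfolding funpow.simps o_apply Z_def[symmetric]
  proof (rule sum_binomial_sym_step[where Y = "\<lambda>l r. Z (r + j) (l + j)" and Y' = "\<lambda>l r. Z (r + Suc j) (l + Suc j)"])
    fix r assume ri: "r \<le> i"
    have e1: "of_nat r * Z (r + j) (Suc (i - r + j)) = (of_nat r * Z (r - 1 + Suc j) (i - r + Suc j) :: 'a)"
      by (cases r) auto
    have e2: "of_nat (i - r) * Z (Suc (r + j)) (i - r + j) = (of_nat (i - r) * Z (r + Suc j) (i - r - 1 + Suc j) :: 'a)"
      by (cases "i - r") auto
    show "A_step c c Z (r + j) (i - r + j) = (c + of_nat j) * (Z (r + j) (Suc (i - r) + j) + Z (Suc r + j) (i - r + j))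
        + (of_nat (i - r) * Z (r + Suc j) (i - r - 1 + Suc j) + of_nat r * Z (r - 1 + Suc j) (i - r + Suc j))"
      using e1 e2 by (simp add: A_step_def algebra_simps)
  next
    show "(\<Sum>r\<le>Suc i. of_nat (Suc i choose r) * Z (r + j) (Suc i - r + j)) = (sym_step c ^^ k) (sym_monomial (x + y) (x * y)) (Suc i) j"
      using Suc.IH[of "Suc i" j] unfolding Z_def .
  next
    show "(\<Sum>r\<le>i - 1. of_nat ((i - 1) choose r) * Z (r + Suc j) (i - 1 - r + Suc j)) = (sym_step c ^^ k) (sym_monomial (x + y) (x * y)) (i - 1) (Suc j)"
      using Suc.IH[of "i - 1" "Suc j"] unfolding Z_def .
  qed
qed

lemma Apoly_eq_sym_step:
  fixes x y c :: "'a::comm_ring_1"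
  shows "Apoly k x y c c = (sym_step c ^^ k) (sym_monomial (x + y) (x * y)) 0 0"
  using A_step_funpow_sym_step[where i = 0 and j = 0 and c = c and k = k and x = x and y = y]
  by (simp add: Apoly_eq_A_sum A_sum_eq_funpow)

lemma Ppoly_eq_sym_step:
  fixes u1 u2 u3 u4 c d :: "'a::comm_ring_1"
  shows "Ppoly n u1 u2 u3 u4 (c - d) (c + d) = (\<Sum>k\<le>n. of_nat (n choose k) * (d * (u3 - u4)) ^ (n - k)
      * (sym_step c ^^ k) (sym_monomial (u3 + u4) (u1 * u2)) 0 0)"
proof -
  define g where "g = (\<lambda>v w l r. u1 ^ v * u2 ^ (w - 1) * u3 ^ r * u4 ^ l)"
  have eigen: "lr_diff g = (\<lambda>v w l r. (u3 - u4) * g v w l r)"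
    by (intro ext) (simp add: lr_diff_def g_def algebra_simps)
  have sym: "(P_step c c ^^ k) g 0 1 0 0 = (sym_step c ^^ k) (sym_monomial (u3 + u4) (u1 * u2)) 0 0" for k
    using P_step_funpow_sym_step[where i = 0 and j = 0 and c = c and k = k
      and a = u1 and b = u2 and x = u3 and y = u4] by (simp add: g_def)
  have "Ppoly n u1 u2 u3 u4 (c - d) (c + d) = (P_step (c - d) (c + d) ^^ n) g 0 1 0 0"
    by (simp add: Ppoly_eq_P_sum P_sum_eq_funpow g_def)
  also have "\<dots> = (\<Sum>k\<le>n. of_nat (n choose k) * (d * (u3 - u4)) ^ (n - k) * (P_step c c ^^ k) g 0 1 0 0)"
    by (simp add: P_step_funpow_binomial[OF eigen])
  finally show ?thesis unfolding sym .
qed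

theorem theorem6p1:
  fixes u1 u2 u3 u4 \<alpha> \<beta> x y :: "'a::field_char_0"
  assumes "x + y = u3 + u4" and "x * y = u1 * u2"
  shows "Ppoly n u1 u2 u3 u4 \<alpha> \<beta> =
    (\<Sum>k=0..n. of_nat (n choose k) * Apoly k x y ((\<alpha> + \<beta>) / 2) ((\<alpha> + \<beta>) / 2)
       * ((\<beta> - \<alpha>) ^ (n - k) * (u3 - u4) ^ (n - k) / 2 ^ (n - k)))"
proof -
  define c where "c = (\<alpha> + \<beta>) / 2"
  define d where "d = (\<beta> - \<alpha>) / 2"
  have "\<alpha> = c - d" "\<beta> = c + d" by (simp_all add: c_def d_def field_simps)
  then have "Ppoly n u1 u2 u3 u4 \<alpha> \<beta>
      = (\<Sum>k\<le>n. of_nat (n choose k) * (d * (u3 - u4)) ^ (n - k) * Apoly k x y c c)"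
    by (simp add: Ppoly_eq_sym_step Apoly_eq_sym_step assms)
  also have "\<dots> = (\<Sum>k=0..n. of_nat (n choose k) * Apoly k x y c c
       * ((\<beta> - \<alpha>) ^ (n - k) * (u3 - u4) ^ (n - k) / 2 ^ (n - k)))"
    by (simp add: atLeast0AtMost d_def power_mult_distrib power_divide mult_ac)
  finally show ?thesis unfolding c_def .
qed

end
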